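(* Let $F$ be a maximally expressive I-GGNN+ of depth $T=1$ (with injective readout). Let $\mathcal G=(A,X)$ and $\hat{\mathcal G}=(\hat A,\hat X)$ be geometric graphs in $\mathbb{R}^d$ whose adjacency matrices are both the complete graph on $n$ nodes, with $X,\hat X\in\mathbb{R}^{n\times d}$ arbitrary. If $F(\mathcal G)=F(\hat{\mathcal G})$, then there exist a permutation $\pi$ of $\{1,\dots,n\}$, $Q\in O(d)$ and $t\in\mathbb{R}^d$ with $\hat x_{\pi(i)}=Qx_i+t$ for all $i$.
   Context: A geometric graph in $\mathbb{R}^d$ is a pair $(A,X)$, $A\in\{0,1\}^{n\times n}$ symmetric zero-diagonal adjacency matrix, $X\in\mathbb{R}^{n\times d}$ with rows $x_1,\dots,x_n$; $\mathcal N_i=\{j:A_{ij}=1\}$. The complete graph has $A_{ij}=1$ for all $i\neq j$. An I-GGNN+ of depth $T$: all nodes start with the same feature $v_i^{(0)}=v^{(0)}$; for $t=0,\dots,T-1$, $v_i^{(t+1)}=f_t(\{\!\{(v_j^{(t)},x_i-x_j):j\in\mathcal N_i\}\!\})$, where $f_t$ is defined on finite multisets and satisfies $f_t(\{\!\{(v_j,z_j)\}\!\})=f_t(\{\!\{(v_j,Qz_j)\}\!\})$ for all $Q\in O(d)$ (the same $Q$ applied to all relative vectors, not to the features); the output is $\mathrm{ReadOut}(\{\!\{v_1^{(T)},\dots,v_n^{(T)}\}\!\})$. It is maximally expressive if $f_t(\{\!\{(v_j,z_j)\}\!\})=f_t(\{\!\{(\hat v_j,\hat z_j)\}\!\})$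 holds iff there is $Q\in O(d)$ with $\{\!\{(v_j,z_j)\}\!\}=\{\!\{(\hat v_j,Q\hat z_j)\}\!\}$, and $\mathrm{ReadOut}$ is injective on finite multisets. *)

theory Defs
  imports "HOL-Analysis.Analysis" "HOL-Library.Multiset"
begin

text \<open>Geometric graphs on n nodes (indexed 0..<n) in R^d, with d = CARD('d).
  Adjacency: a relation A :: nat => nat => bool; positions X :: nat => real^'d.\<close>

definition complete_adj :: "nat \<Rightarrow> nat \<Rightarrow> bool" where
  "complete_adj i j \<longleftrightarrow> i \<noteq> j"

definition nbhd :: "nat \<Rightarrow> (nat \<Rightarrow> nat \<Rightarrow> bool) \<Rightarrow> nat \<Rightarrow> nat set" where
  "nbhd n A i = {j. j < n \<and> A i j}"

definition rot_mset :: "real^'d^'d \<Rightarrow> ('v \<times> (real^'d)) multiset \<Rightarrow> ('v \<times> (real^'d)) multiset" where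
  "rot_mset Q M = image_mset (\<lambda>(v, z). (v, Q *v z)) M"

definition o_invariant :: "(('v \<times> (real^'d)) multiset \<Rightarrow> 'w) \<Rightarrow> bool" where
  "o_invariant f \<longleftrightarrow> (\<forall>M Q. orthogonal_matrix Q \<longrightarrow> f (rot_mset Q M) = f M)"

definition max_expressive_update :: "(('v \<times> (real^'d)) multiset \<Rightarrow> 'w) \<Rightarrow> bool" where
  "max_expressive_update f \<longleftrightarrow>
     (\<forall>M M'. f M = f M' \<longleftrightarrow> (\<exists>Q. orthogonal_matrix Q \<and> M = rot_mset Q M'))"

definition ggnn_layer ::
  "nat \<Rightarrow> (nat \<Rightarrow> nat \<Rightarrow> bool) \<Rightarrow> (nat \<Rightarrow> real^'d) \<Rightarrow> (('v \<times> (real^'d)) multiset \<Rightarrow> 'v)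
   \<Rightarrow> (nat \<Rightarrow> 'v) \<Rightarrow> (nat \<Rightarrow> 'v)" where
  "ggnn_layer n A X f v = (\<lambda>i. f (image_mset (\<lambda>j. (v j, X i - X j)) (mset_set (nbhd n A i))))"

fun ggnn_features ::
  "nat \<Rightarrow> (nat \<Rightarrow> nat \<Rightarrow> bool) \<Rightarrow> (nat \<Rightarrow> real^'d) \<Rightarrow> 'v
   \<Rightarrow> (nat \<Rightarrow> ('v \<times> (real^'d)) multiset \<Rightarrow> 'v) \<Rightarrow> nat \<Rightarrow> (nat \<Rightarrow> 'v)" where
  "ggnn_features n A X v0 fs 0 = (\<lambda>i. v0)"
| "ggnn_features n A X v0 fs (Suc t) = ggnn_layer n A X (fs t) (ggnn_features n A X v0 fs t)"

definition ggnn_output ::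
  "nat \<Rightarrow> (nat \<Rightarrow> nat \<Rightarrow> bool) \<Rightarrow> (nat \<Rightarrow> real^'d) \<Rightarrow> 'v
   \<Rightarrow> (nat \<Rightarrow> ('v \<times> (real^'d)) multiset \<Rightarrow> 'v) \<Rightarrow> ('v multiset \<Rightarrow> 'o) \<Rightarrow> nat \<Rightarrow> 'o" where
  "ggnn_output n A X v0 fs R T = R (image_mset (ggnn_features n A X v0 fs T) (mset_set {..<n}))"

end

theory Submission
  imports Defs "HOL-Combinatorics.Permutations"
begin

text \<open>On the complete graph a depth-one network gives node i the feature
  F {{(v0, x_i - x_j) : j \<noteq> i}}. Injectivity of the readout matches the feature of node 0
  with that of some node k of the other graph, and maximal expressivity yields Q \<in> O(d) with
  {{x_0 - x_j}} = Q {{x'_k - x'_j}}. Applying the affine map u \<mapsto> x'_k - Q^T u to both sides shows that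
  the point multisets {{Q^T x_j + t}} and {{x'_j}} coincide, and equal multisets indexed by
  {..<n} differ by a permutation.\<close>

lemma permutes_of_image_mset_eq:
  assumes "image_mset g (mset_set {..<n}) = image_mset h (mset_set {..<(n::nat)})"
  shows "\<exists>p. p permutes {..<n} \<and> (\<forall>i<n. h (p i) = g i)"
proof -
  have "mset (map g [0..<n]) = mset (map h [0..<n])"
    using assms by (simp add: lessThan_atLeast0 flip: atLeast_upt)
  then obtain p where p: "p permutes {..<n}" "permute_list p (map h [0..<n]) = map g [0..<n]"
    by (metis length_map length_upt minus_nat.diff_0 mset_eq_permutation)
  have "h (p i) = g i" if "i < n" for i
  proof -
    have "p i < n" using p(1) that permutes_in_image by fastforce
    then show ?thesis
      using p that permute_list_nth[of p "map h [0..<n]" i] by simp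
  qed
  with p(1) show ?thesis by blast
qed

lemma nbhd_complete_adj: "nbhd n complete_adj i = {..<n} - {i}"
  by (auto simp: nbhd_def complete_adj_def)

lemma ggnn_output_complete_adj_1:
  "ggnn_output n complete_adj X v0 fs R 1 =
     R (image_mset (\<lambda>i. fs 0 (image_mset (\<lambda>j. (v0, X i - X j)) (mset_set ({..<n} - {i}))))
        (mset_set {..<n}))"
  by (simp add: ggnn_output_def ggnn_layer_def nbhd_complete_adj)

lemma image_mset_snd_rot_mset:
  "image_mset snd (rot_mset Q M) = image_mset ((*v) Q) (image_mset snd M)"
  by (simp add: rot_mset_def multiset.map_comp o_def case_prod_unfold)

lemma image_mset_mset_set_remove:
  assumes "finite I" "i \<in> I"
  shows "image_mset f (mset_set I) = add_mset (f i) (image_mset f (mset_set (I - {i})))"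
  using assms by (subst mset_set.remove) auto

lemma rigid_motion_of_relative_vectors_eq:
  fixes X Y :: "nat \<Rightarrow> real^'d"
  assumes Q: "orthogonal_matrix Q" and I: "finite I" "i \<in> I" "k \<in> I"
    and rel: "image_mset (\<lambda>j. X i - X j) (mset_set (I - {i})) =
              image_mset (\<lambda>j. Q *v (Y k - Y j)) (mset_set (I - {k}))"
  shows "image_mset (\<lambda>j. transpose Q *v X j + (Y k - transpose Q *v X i)) (mset_set I) =
         image_mset Y (mset_set I)"
proof -
  \<comment> \<open>The omitted indices i and k contribute the zero vector to both sides.\<close>
  have "image_mset (\<lambda>j. X i - X j) (mset_set I) =
        add_mset 0 (image_mset (\<lambda>j. X i - X j) (mset_set (I - {i})))"
    using image_mset_mset_set_remove[OF I(1,2), of "\<lambda>j. X i - X j"] by simp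
  also have "\<dots> = add_mset 0 (image_mset (\<lambda>j. Q *v (Y k - Y j)) (mset_set (I - {k})))"
    using rel by simp
  also have "\<dots> = image_mset (\<lambda>j. Q *v (Y k - Y j)) (mset_set I)"
    using image_mset_mset_set_remove[OF I(1,3), of "\<lambda>j. Q *v (Y k - Y j)"] by simp
  finally have "image_mset (\<lambda>j. X i - X j) (mset_set I) =
                image_mset (\<lambda>j. Q *v (Y k - Y j)) (mset_set I)" .
  then have "image_mset (\<lambda>u. Y k - transpose Q *v u) (image_mset (\<lambda>j. X i - X j) (mset_set I)) =
             image_mset (\<lambda>u. Y k - transpose Q *v u) (image_mset (\<lambda>j. Q *v (Y k - Y j)) (mset_set I))"
    by simp
  moreover have "transpose Q ** Q = mat 1"
    using Q by (simp add: orthogonal_matrix_def)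
  ultimately show ?thesis
    by (simp add: multiset.map_comp o_def matrix_vector_mul_assoc
        matrix_vector_mult_diff_distrib algebra_simps del: transpose_matrix_vector)
qed

theorem mainTheorem6:
  fixes n :: nat
    and X Xh :: "nat \<Rightarrow> real^'d"
    and v0 :: 'v
    and fs :: "nat \<Rightarrow> ('v \<times> (real^'d)) multiset \<Rightarrow> 'v"
    and R :: "'v multiset \<Rightarrow> 'o"
  assumes inv: "\<forall>t<1. o_invariant (fs t)"
    and maxexp: "\<forall>t<1. max_expressive_update (fs t)"
    and readout: "inj R"
    and eq: "ggnn_output n complete_adj X v0 fs R 1 = ggnn_output n complete_adj Xh v0 fs R 1"
  shows "\<exists>\<pi> Q t. \<pi> permutes {..<n} \<and> orthogonal_matrix Q \<and>
           (\<forall>i<n. Xh (\<pi> i) = Q *v X i + t)"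
proof (cases "n = 0")
  case True
  then show ?thesis
    by (intro exI[of _ id] exI[of _ "mat 1"] exI[of _ 0]) (auto simp: orthogonal_matrix_id)
next
  case False
  define M where "M Y i = image_mset (\<lambda>j. (v0, Y i - Y j)) (mset_set ({..<n} - {i}))"
    for Y :: "nat \<Rightarrow> real^'d" and i
  have features_eq: "image_mset (\<lambda>i. fs 0 (M X i)) (mset_set {..<n}) =
                     image_mset (\<lambda>i. fs 0 (M Xh i)) (mset_set {..<n})"
    using eq readout by (simp only: ggnn_output_complete_adj_1 M_def inj_eq)
  have "fs 0 (M X 0) \<in># image_mset (\<lambda>i. fs 0 (M X i)) (mset_set {..<n})"
    using False by simp
  then obtain k where k: "k < n" "fs 0 (M X 0) = fs 0 (M Xh k)"
    unfolding features_eq by auto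
  moreover have "max_expressive_update (fs 0)"
    using maxexp by simp
  ultimately obtain Q where Q: "orthogonal_matrix Q" "M X 0 = rot_mset Q (M Xh k)"
    unfolding max_expressive_update_def by blast
  then have "image_mset snd (M X 0) = image_mset ((*v) Q) (image_mset snd (M Xh k))"
    by (simp add: image_mset_snd_rot_mset)
  then have "image_mset (\<lambda>j. X 0 - X j) (mset_set ({..<n} - {0})) =
             image_mset (\<lambda>j. Q *v (Xh k - Xh j)) (mset_set ({..<n} - {k}))"
    by (simp add: M_def multiset.map_comp o_def)
  then have "image_mset (\<lambda>j. transpose Q *v X j + (Xh k - transpose Q *v X 0)) (mset_set {..<n}) =
             image_mset Xh (mset_set {..<n})"
    using Q(1) False k(1) by (intro rigid_motion_of_relative_vectors_eq) auto
  then obtain \<pi> where "\<pi> permutes {..<n}"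
      "\<forall>i<n. Xh (\<pi> i) = transpose Q *v X i + (Xh k - transpose Q *v X 0)"
    using permutes_of_image_mset_eq by blast
  with Q(1) show ?thesis
    by (metis orthogonal_matrix_transpose)
qed

end
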